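(* Let $K$ be a field, $P=K[x_1,\dots,x_n]$, $g_1,\dots,g_r\in P$, $I=\langle g_1,\dots,g_r\rangle$, and let $Z=(z_1,\dots,z_s)$ be a tuple of distinct indeterminates among $x_1,\dots,x_n$. The procedure $\mathrm{CHECK}$ applied to $(g_1,\dots,g_r)$ and $Z$ terminates after finitely many steps and returns either ``Fail'' or a tuple $W=(w_1,\dots,w_n)\in\mathbb{N}^n$. If it returns a tuple $W$, then there exist $f_1,\dots,f_s\in\langle g_1,\dots,g_r\rangle_K$ such that for every term ordering $\sigma$ on $P$ compatible with the grading given by $W$ we have $\operatorname{LT}_\sigma(f_i)=z_i$ for $i=1,\dots,s$; in particular $(f_1,\dots,f_s)$ is a $Z$-separating tuple of polynomials in $I$.
   Context: $\operatorname{Supp}(f)$ is the set of terms occurring in $f$; $\operatorname{Lin}(f)$ is the homogeneous degree-1 component of $f$; $\langle\cdot\rangle_K$ denotes $K$-linear span. A tuple $(f_1,\dots,f_s)$ of polynomials in an ideal $I$ is $Z$-separating if there is a term ordering $\sigma$ with $\operatorname{LT}_\sigma(f_i)=z_i$ for all $i$. For $W=(w_1,\dots,w_n)$, the $W$-degree of a term $x_1^{a_1}\cdots x_n^{a_n}$ is $\sum w_ia_i$; a term ordering $\sigma$ is compatible with the grading given by $W$ if $t>_\sigma t'$ whenever the $W$-degree of $t$ exceeds that of $t'$. Procedure $\mathrm{LI}$ (linear interreduction), applied to a tuple $Z=(z_1,\dots,z_s)$ of distinct indeterminates and polynomials $g_1,\dots,g_r$: let $t_1>\dots>t_m$ (lexicographic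 order, $x_1>\dots>x_n$) be the terms of $\bigcup_j\operatorname{Supp}(g_j)$ other than $z_1,\dots,z_s$; form the coefficient matrix $M$ of $g_1,\dots,g_r$ w.r.t. column order $(z_1,\dots,z_s,t_1,\dots,t_m)$; output the polynomials whose coefficient vectors are the nonzero rows of the reduced row echelon form of $M$, in order. Procedure $\mathrm{CHECK}$ on input $(g_1,\dots,g_r)$ and $Z$: (1) set $w_1=\dots=w_n=0$, $\delta=\max_j\deg(g_j)$, $d=1$. (2) In each $g_j$ delete every monomial not divisible by some indeterminate of $Z$. (3) If $\dim_K\langle\operatorname{Lin}(g_1),\dots,\operatorname{Lin}(g_r)\rangle_K<\#Z$, return ``Fail''. (4) Repeat: (i) replace the current list $g_1,\dots,g_r$ by the output of $\mathrm{LI}$ applied to the current $Z$ and the current list; (ii) let $\widetilde Z$ be the set of indeterminates of the current $Z$ that occur as elements of the current list; (iii) if $\widetilde Z=\emptyset$, return ``Fail''; (iv) for each $z\in\widetilde Z$, say $z=x_k$, set $w_k=d$ and remove $z$ from $Z$; (v) in each current $g_j$ delete every monomial not divisible by some indeterminate of the (updated) $Z$; (vi) replace $d$ by $\delta d+1$; until $Z$ is empty. (5) Return $W=(w_1,\dots,w_n)$. *)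

theory Defs
  imports "HOL-Library.Poly_Mapping" "HOL-Library.List_Lexorder" "HOL-Library.While_Combinator"
    "Jordan_Normal_Form.Gauss_Jordan_Elimination"
begin

text \<open>Terms (power products) are exponent vectors \<open>nat \<Rightarrow>\<^sub>0 nat\<close>; the indeterminate
  x_(k+1) of the paper is index k.
  The polynomial ring P = K[x_1,...,x_n] consists of those polynomials all of whose
  terms only involve the indices below n.\<close>

type_synonym term_ = "nat \<Rightarrow>\<^sub>0 nat"
type_synonym 'a mpoly = "term_ \<Rightarrow>\<^sub>0 'a"

definition terms_in :: "nat \<Rightarrow> term_ set" where
  "terms_in n = {t. Poly_Mapping.keys t \<subseteq> {..<n}}"

definition polys_in :: "nat \<Rightarrow> ('a::zero) mpoly set" where
  "polys_in n = {p. Poly_Mapping.keys p \<subseteq> terms_in n}"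

definition var_term :: "nat \<Rightarrow> term_" where
  "var_term k = Poly_Mapping.single k 1"

definition var_poly :: "nat \<Rightarrow> ('a::{zero,one}) mpoly" where
  "var_poly k = Poly_Mapping.single (var_term k) 1"

definition tdeg :: "term_ \<Rightarrow> nat" where
  "tdeg t = (\<Sum>i\<in>Poly_Mapping.keys t. Poly_Mapping.lookup t i)"

definition pdeg :: "('a::zero) mpoly \<Rightarrow> nat" where
  "pdeg p = Max (insert 0 (tdeg ` Poly_Mapping.keys p))"

definition restrict_terms :: "(term_ \<Rightarrow> bool) \<Rightarrow> ('a::comm_monoid_add) mpoly \<Rightarrow> 'a mpoly" where
  "restrict_terms Q p = (\<Sum>t\<in>{t\<in>Poly_Mapping.keys p. Q t}. Poly_Mapping.single t (Poly_Mapping.lookup p t))"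

definition del_nondiv :: "nat list \<Rightarrow> ('a::comm_monoid_add) mpoly \<Rightarrow> 'a mpoly" where
  "del_nondiv Z p = restrict_terms (\<lambda>t. \<exists>k\<in>set Z. Poly_Mapping.lookup t k > 0) p"

definition Lin :: "('a::comm_monoid_add) mpoly \<Rightarrow> 'a mpoly" where
  "Lin p = restrict_terms (\<lambda>t. tdeg t = 1) p"

definition pscale :: "'a::field \<Rightarrow> 'a mpoly \<Rightarrow> 'a mpoly" where
  "pscale c p = Poly_Mapping.map (\<lambda>a. c * a) p"

definition span_K :: "('a::field) mpoly list \<Rightarrow> 'a mpoly set" where
  "span_K gs = {f. \<exists>c::nat \<Rightarrow> 'a. f = (\<Sum>j<length gs. pscale (c j) (gs ! j))}"

definition dim_span_K :: "('a::field) mpoly list \<Rightarrow> nat" where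
  "dim_span_K gs = vector_space.dim pscale (set gs)"

definition ideal_gen :: "nat \<Rightarrow> ('a::field) mpoly list \<Rightarrow> 'a mpoly set" where
  "ideal_gen n gs = {f. \<exists>h::nat \<Rightarrow> 'a mpoly. (\<forall>j<length gs. h j \<in> polys_in n) \<and>
                          f = (\<Sum>j<length gs. h j * gs ! j)}"

text \<open>Lexicographic key of a term in n indeterminates, x_1 > ... > x_n.\<close>
definition lex_key :: "nat \<Rightarrow> term_ \<Rightarrow> nat list" where
  "lex_key n t = map (Poly_Mapping.lookup t) [0..<n]"

definition LI_other_terms :: "nat \<Rightarrow> nat list \<Rightarrow> ('a::zero) mpoly list \<Rightarrow> term_ list" where
  "LI_other_terms n Z gs =
     rev (sort_key (lex_key n)
       (sorted_list_of_set ((\<Union>g\<in>set gs. Poly_Mapping.keys g) - var_term ` set Z)))"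

definition LI_columns :: "nat \<Rightarrow> nat list \<Rightarrow> ('a::zero) mpoly list \<Rightarrow> term_ list" where
  "LI_columns n Z gs = map var_term Z @ LI_other_terms n Z gs"

definition coeff_matrix :: "term_ list \<Rightarrow> ('a::zero) mpoly list \<Rightarrow> 'a mat" where
  "coeff_matrix cs gs = mat (length gs) (length cs) (\<lambda>(i,j). Poly_Mapping.lookup (gs ! i) (cs ! j))"

definition row_poly :: "term_ list \<Rightarrow> ('a::comm_monoid_add) mat \<Rightarrow> nat \<Rightarrow> 'a mpoly" where
  "row_poly cs R i = (\<Sum>j<length cs. Poly_Mapping.single (cs ! j) (R $$ (i, j)))"

text \<open>gauss_jordan_single computes the reduced row echelon form (pivots 1, all other
  entries of pivot columns 0, see row_echelon_form in Jordan_Normal_Form).\<close>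
definition LI :: "nat \<Rightarrow> nat list \<Rightarrow> ('a::field) mpoly list \<Rightarrow> 'a mpoly list" where
  "LI n Z gs =
     (let cs = LI_columns n Z gs;
          R = gauss_jordan_single (coeff_matrix cs gs)
      in map (row_poly cs R)
           (filter (\<lambda>i. \<exists>j<length cs. R $$ (i, j) \<noteq> 0) [0..<dim_row R]))"

datatype check_result = Fail | Weights "nat list"

text \<open>State of the loop in step (4): current list, current Z, current weights, current d,
  status (None = running, Some False = Fail returned, Some True = loop finished).\<close>
type_synonym 'a check_state = "'a mpoly list \<times> nat list \<times> (nat \<Rightarrow> nat) \<times> nat \<times> bool option"

definition check_body :: "nat \<Rightarrow> nat \<Rightarrow> ('a::field) check_state \<Rightarrow> 'a check_state" where
  "check_body n \<delta> st =
     (case st of (gs, Z, w, d, _) \<Rightarrow>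
       (let gs1 = LI n Z gs;
            Zt = filter (\<lambda>z. var_poly z \<in> set gs1) Z
        in if Zt = [] then (gs1, Z, w, d, Some False)
           else (let w1 = (\<lambda>k. if k \<in> set Zt then d else w k);
                     Z1 = filter (\<lambda>z. z \<notin> set Zt) Z;
                     gs2 = map (del_nondiv Z1) gs1;
                     d1 = \<delta> * d + 1
                 in (gs2, Z1, w1, d1, if Z1 = [] then Some True else None))))"

definition check_running :: "('a::field) check_state \<Rightarrow> bool" where
  "check_running st = (case st of (_, _, _, _, s) \<Rightarrow> s = None)"

text \<open>CHECK n gs Z = None means that the procedure does not terminate;
  Some r means it terminates with result r.\<close>
definition CHECK :: "nat \<Rightarrow> ('a::field) mpoly list \<Rightarrow> nat list \<Rightarrow> check_result option" where
  "CHECK n gs Z =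
     (let \<delta> = Max (insert 0 (pdeg ` set gs));
          gs0 = map (del_nondiv Z) gs
      in if dim_span_K (map Lin gs0) < length Z then Some Fail
         else (case while_option check_running (check_body n \<delta>) (gs0, Z, (\<lambda>_. 0), 1, None) of
                 None \<Rightarrow> None
               | Some (_, _, w, _, s) \<Rightarrow>
                   Some (if s = Some True then Weights (map w [0..<n]) else Fail)))"

definition term_ordering :: "nat \<Rightarrow> (term_ \<Rightarrow> term_ \<Rightarrow> bool) \<Rightarrow> bool" where
  "term_ordering n ord \<longleftrightarrow>
     (\<forall>t\<in>terms_in n. ord t t) \<and>
     (\<forall>t\<in>terms_in n. \<forall>u\<in>terms_in n. ord t u \<and> ord u t \<longrightarrow> t = u) \<and>
     (\<forall>t\<in>terms_in n. \<forall>u\<in>terms_in n. \<forall>v\<in>terms_in n. ord t u \<and> ord u v \<longrightarrow> ord t v) \<and>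
     (\<forall>t\<in>terms_in n. \<forall>u\<in>terms_in n. ord t u \<or> ord u t) \<and>
     (\<forall>t\<in>terms_in n. ord 0 t) \<and>
     (\<forall>t\<in>terms_in n. \<forall>u\<in>terms_in n. \<forall>v\<in>terms_in n. ord t u \<longrightarrow> ord (t + v) (u + v))"

definition LT :: "(term_ \<Rightarrow> term_ \<Rightarrow> bool) \<Rightarrow> ('a::zero) mpoly \<Rightarrow> term_" where
  "LT ord f = (THE t. t \<in> Poly_Mapping.keys f \<and> (\<forall>u\<in>Poly_Mapping.keys f. ord u t))"

definition W_deg :: "nat list \<Rightarrow> term_ \<Rightarrow> nat" where
  "W_deg W t = (\<Sum>i<length W. W ! i * Poly_Mapping.lookup t i)"

definition compatible_with_grading :: "nat \<Rightarrow> nat list \<Rightarrow> (term_ \<Rightarrow> term_ \<Rightarrow> bool) \<Rightarrow> bool" where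
  "compatible_with_grading n W ord \<longleftrightarrow>
     (\<forall>t\<in>terms_in n. \<forall>u\<in>terms_in n. W_deg W t > W_deg W u \<longrightarrow> ord u t \<and> t \<noteq> u)"

end

theory Submission
  imports Defs
begin

text \<open>Along the loop of CHECK every current polynomial agrees with an element of
  \<open>span_K gs\<close> up to low terms: terms containing none of the remaining indeterminates
  of Z and of weight below the current d.  Linear interreduction preserves this, since
  it only forms linear combinations, and so does the deletion step, since a deleted term
  has degree at most \<open>\<delta>\<close>, hence weight at most \<open>\<delta> d < \<delta> d + 1\<close>.  When an indeterminate
  z occurs as an element of the list, the corresponding element of the span is z plus
  low terms, so giving z the weight d makes it the unique term of maximal W-degree; later
  rounds only change the weights of indeterminates that do not occur in these low terms.
  A term of strictly maximal W-degree is the leading term for every ordering compatible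
  with W.  Each round either stops or removes an indeterminate from Z, so CHECK
  terminates.\<close>

lemma lookup_pscale [simp]: "Poly_Mapping.lookup (pscale c p) t = c * Poly_Mapping.lookup p t"
  by (simp add: pscale_def Poly_Mapping.map.rep_eq when_def)

lemma pscale_single: "pscale c (Poly_Mapping.single t v) = Poly_Mapping.single t (c * v)"
  by (rule poly_mapping_eqI) (simp add: Poly_Mapping.lookup_single when_def)

lemma pscale_sum: "pscale c (\<Sum>j\<in>A. f j) = (\<Sum>j\<in>A. pscale c (f j))"
  by (rule poly_mapping_eqI) (simp add: Poly_Mapping.lookup_sum sum_distrib_left)

lemma pscale_diff: "pscale c (p - q) = pscale c p - pscale c q"
  by (rule poly_mapping_eqI) (simp add: Poly_Mapping.lookup_minus algebra_simps)

lemma single_sum: "Poly_Mapping.single t (\<Sum>k\<in>A. f k) = (\<Sum>k\<in>A. Poly_Mapping.single t (f k))"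
  by (rule poly_mapping_eqI) (simp add: Poly_Mapping.lookup_sum Poly_Mapping.lookup_single when_def)

lemma keys_pscale_subset: "Poly_Mapping.keys (pscale c p) \<subseteq> Poly_Mapping.keys p"
  by (auto simp: in_keys_iff)

lemma keys_lincomb_subset:
  "Poly_Mapping.keys (\<Sum>k\<in>A. pscale (c k) (f k)) \<subseteq> (\<Union>k\<in>A. Poly_Mapping.keys (f k))"
  using keys_sum[of "\<lambda>k. pscale (c k) (f k)" A] keys_pscale_subset by blast

lemma sum_single_lookup:
  assumes "finite S" "Poly_Mapping.keys g \<subseteq> S"
  shows "(\<Sum>t\<in>S. Poly_Mapping.single t (Poly_Mapping.lookup g t)) = g"
proof (rule poly_mapping_eqI)
  fix u
  have "Poly_Mapping.lookup (\<Sum>t\<in>S. Poly_Mapping.single t (Poly_Mapping.lookup g t)) u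
      = (\<Sum>t\<in>S. if t = u then Poly_Mapping.lookup g t else 0)"
    by (simp add: Poly_Mapping.lookup_sum Poly_Mapping.lookup_single when_def)
  also have "\<dots> = Poly_Mapping.lookup g u"
    using assms by (auto simp: sum.delta' in_keys_iff)
  finally show "Poly_Mapping.lookup (\<Sum>t\<in>S. Poly_Mapping.single t (Poly_Mapping.lookup g t)) u
      = Poly_Mapping.lookup g u" .
qed

lemma sum_nth_distinct: "distinct cs \<Longrightarrow> (\<Sum>j<length cs. F (cs ! j)) = (\<Sum>t\<in>set cs. F t)"
proof -
  assume "distinct cs"
  then have "inj_on ((!) cs) {..<length cs}" by (auto simp: inj_on_def nth_eq_iff_index_eq)
  moreover have "set cs = (!) cs ` {..<length cs}" by (auto simp: set_conv_nth)
  ultimately show ?thesis by (simp add: sum.reindex)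
qed

definition terms_of :: "('a::zero) mpoly list \<Rightarrow> term_ set" where
  "terms_of gs = (\<Union>g\<in>set gs. Poly_Mapping.keys g)"

lemma nth_in_span_K: "i < length gs \<Longrightarrow> gs ! i \<in> span_K gs"
proof -
  assume i: "i < length gs"
  have "(\<Sum>j<length gs. pscale (if j = i then 1 else 0) (gs ! j)) = gs ! i"
  proof (rule poly_mapping_eqI)
    fix t
    have "Poly_Mapping.lookup (\<Sum>j<length gs. pscale (if j = i then 1 else 0) (gs ! j)) t
        = (\<Sum>j<length gs. if j = i then Poly_Mapping.lookup (gs ! j) t else 0)"
      unfolding Poly_Mapping.lookup_sum by (rule sum.cong) auto
    then show "Poly_Mapping.lookup (\<Sum>j<length gs. pscale (if j = i then 1 else 0) (gs ! j)) t
        = Poly_Mapping.lookup (gs ! i) t" using i by simp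
  qed
  then show ?thesis unfolding span_K_def by (auto intro!: exI[of _ "\<lambda>j. if j = i then 1 else 0"])
qed

lemma lincomb_in_span_K:
  assumes "\<forall>k<m. h k \<in> span_K gs"
  shows "(\<Sum>k<m. pscale (c k) (h k)) \<in> span_K gs"
proof -
  from assms have "\<forall>k. \<exists>e. k < m \<longrightarrow> h k = (\<Sum>j<length gs. pscale (e j) (gs ! j))"
    by (auto simp: span_K_def)
  then obtain e where e: "\<And>k. k < m \<Longrightarrow> h k = (\<Sum>j<length gs. pscale (e k j) (gs ! j))"
    by metis
  have "(\<Sum>k<m. pscale (c k) (h k)) = (\<Sum>j<length gs. pscale (\<Sum>k<m. c k * e k j) (gs ! j))"
  proof (rule poly_mapping_eqI)
    fix t
    have "Poly_Mapping.lookup (\<Sum>k<m. pscale (c k) (h k)) t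
        = (\<Sum>k<m. c k * (\<Sum>j<length gs. e k j * Poly_Mapping.lookup (gs ! j) t))"
      by (simp add: Poly_Mapping.lookup_sum e)
    also have "\<dots> = (\<Sum>j<length gs. (\<Sum>k<m. c k * e k j) * Poly_Mapping.lookup (gs ! j) t)"
      by (simp add: sum_distrib_left sum_distrib_right mult.assoc sum.swap[of _ "{..<m}"])
    finally show "Poly_Mapping.lookup (\<Sum>k<m. pscale (c k) (h k)) t
        = Poly_Mapping.lookup (\<Sum>j<length gs. pscale (\<Sum>k<m. c k * e k j) (gs ! j)) t"
      by (simp add: Poly_Mapping.lookup_sum)
  qed
  then show ?thesis by (auto simp: span_K_def)
qed

lemma keys_span_K: "h \<in> span_K gs \<Longrightarrow> Poly_Mapping.keys h \<subseteq> terms_of gs"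
  unfolding span_K_def terms_of_def using keys_lincomb_subset by fastforce

lemma span_K_subset_ideal_gen: "span_K gs \<subseteq> ideal_gen n gs"
proof
  fix h assume "h \<in> span_K gs"
  then obtain c where h: "h = (\<Sum>j<length gs. pscale (c j) (gs ! j))" by (auto simp: span_K_def)
  have "pscale (c j) (gs ! j) = Poly_Mapping.single 0 (c j) * gs ! j" for j
    unfolding pscale_def by (rule mult_map_scale_conv_mult)
  moreover have "Poly_Mapping.single 0 (c j) \<in> polys_in n" for j
    by (auto simp: polys_in_def terms_in_def)
  ultimately show "h \<in> ideal_gen n gs" unfolding ideal_gen_def h
    by (intro CollectI exI[of _ "\<lambda>j. Poly_Mapping.single 0 (c j)"]) auto
qed

lemma inj_var_term: "inj var_term"
  by (rule injI) (metis var_term_def Poly_Mapping.lookup_single_eq Poly_Mapping.lookup_single_not_eq one_neq_zero)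

lemma lookup_var_term: "Poly_Mapping.lookup (var_term z) k = (if k = z then 1 else 0)"
  by (simp add: var_term_def Poly_Mapping.lookup_single when_def)

lemma tdeg_var_term: "tdeg (var_term z) = 1"
  by (simp add: tdeg_def var_term_def)

lemma keys_var_poly: "Poly_Mapping.keys (var_poly z :: ('a::zero_neq_one) mpoly) = {var_term z}"
  by (simp add: var_poly_def)

lemma lookup_var_poly:
  "Poly_Mapping.lookup (var_poly z :: ('a::zero_neq_one) mpoly) u = (if u = var_term z then 1 else 0)"
  by (simp add: var_poly_def Poly_Mapping.lookup_single when_def)

lemma
  assumes "distinct Z"
  shows distinct_LI_columns: "distinct (LI_columns n Z gl)"
    and keys_subset_LI_columns: "g \<in> set gl \<Longrightarrow> Poly_Mapping.keys g \<subseteq> set (LI_columns n Z gl)"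
proof -
  have "finite ((\<Union>g\<in>set gl. Poly_Mapping.keys g) - var_term ` set Z)" by auto
  then have "set (LI_other_terms n Z gl) = (\<Union>g\<in>set gl. Poly_Mapping.keys g) - var_term ` set Z"
    and "distinct (LI_other_terms n Z gl)"
    by (auto simp: LI_other_terms_def)
  with assms inj_var_term show "distinct (LI_columns n Z gl)"
    by (auto simp: LI_columns_def distinct_map inj_on_def inj_def)
  show "g \<in> set gl \<Longrightarrow> Poly_Mapping.keys g \<subseteq> set (LI_columns n Z gl)"
    using \<open>set (LI_other_terms n Z gl) = _\<close> by (auto simp: LI_columns_def)
qed

text \<open>Gauss-Jordan elimination multiplies the coefficient matrix by an invertible matrix
  from the left, so every row of the result is a linear combination of the input rows.\<close>
lemma LI_lincomb:
  assumes "distinct Z" "q \<in> set (LI n Z gl)"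
  shows "\<exists>c. q = (\<Sum>k<length gl. pscale (c k) (gl ! k))"
proof -
  define cs where "cs = LI_columns n Z gl"
  define A where "A = coeff_matrix cs gl"
  define R where "R = gauss_jordan_single A"
  have A: "A \<in> carrier_mat (length gl) (length cs)"
    by (simp add: A_def coeff_matrix_def)
  note gj = gauss_jordan_single[OF A R_def[symmetric]]
  from gj(4) obtain P where P: "R = P * A" "P \<in> carrier_mat (length gl) (length gl)" by blast
  from gj(2) obtain i where i: "i < length gl" and q: "q = row_poly cs R i"
    using assms(2) by (auto simp: LI_def Let_def cs_def R_def A_def)
  have R: "R $$ (i, j) = (\<Sum>k<length gl. P $$ (i, k) * Poly_Mapping.lookup (gl ! k) (cs ! j))"
    if "j < length cs" for j
    using P i that A by (simp add: index_mult_mat scalar_prod_def A_def coeff_matrix_def lessThan_atLeast0)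
  have "q = (\<Sum>j<length cs. Poly_Mapping.single (cs ! j)
              (\<Sum>k<length gl. P $$ (i, k) * Poly_Mapping.lookup (gl ! k) (cs ! j)))"
    unfolding q row_poly_def by (rule sum.cong) (auto simp: R)
  also have "\<dots> = (\<Sum>k<length gl. pscale (P $$ (i, k))
      (\<Sum>j<length cs. Poly_Mapping.single (cs ! j) (Poly_Mapping.lookup (gl ! k) (cs ! j))))"
    by (simp add: single_sum pscale_sum pscale_single sum.swap[of _ "{..<length gl}"])
  also have "\<dots> = (\<Sum>k<length gl. pscale (P $$ (i, k)) (gl ! k))"
  proof (rule sum.cong[OF refl])
    fix k assume "k \<in> {..<length gl}"
    then have "Poly_Mapping.keys (gl ! k) \<subseteq> set cs"
      unfolding cs_def by (intro keys_subset_LI_columns[OF assms(1)]) simp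
    moreover have "distinct cs" unfolding cs_def by (rule distinct_LI_columns[OF assms(1)])
    ultimately show "pscale (P $$ (i, k)) (\<Sum>j<length cs. Poly_Mapping.single (cs ! j)
        (Poly_Mapping.lookup (gl ! k) (cs ! j))) = pscale (P $$ (i, k)) (gl ! k)"
      using sum_nth_distinct[of cs "\<lambda>t. Poly_Mapping.single t (Poly_Mapping.lookup (gl ! k) t)"]
        sum_single_lookup[of "set cs" "gl ! k"] by simp
  qed
  finally show ?thesis by (intro exI[of _ "\<lambda>k. P $$ (i, k)"])
qed

lemma lookup_restrict_terms:
  "Poly_Mapping.lookup (restrict_terms Q p) u = (if Q u then Poly_Mapping.lookup p u else 0)"
proof -
  have "Poly_Mapping.lookup (restrict_terms Q p) u
      = (\<Sum>t\<in>{t\<in>Poly_Mapping.keys p. Q t}. if t = u then Poly_Mapping.lookup p t else 0)"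
    by (simp add: restrict_terms_def Poly_Mapping.lookup_sum Poly_Mapping.lookup_single when_def)
  then show ?thesis by (auto simp: in_keys_iff)
qed

lemma lookup_del_nondiv:
  "Poly_Mapping.lookup (del_nondiv Z p) u
    = (if \<exists>k\<in>set Z. Poly_Mapping.lookup u k > 0 then Poly_Mapping.lookup p u else 0)"
  by (simp add: del_nondiv_def lookup_restrict_terms)

lemma keys_del_nondiv_subset: "Poly_Mapping.keys (del_nondiv Z p) \<subseteq> Poly_Mapping.keys p"
  by (auto simp: in_keys_iff lookup_del_nondiv split: if_splits)

definition wdeg :: "nat \<Rightarrow> (nat \<Rightarrow> nat) \<Rightarrow> term_ \<Rightarrow> nat" where
  "wdeg n w t = (\<Sum>i<n. w i * Poly_Mapping.lookup t i)"

lemma W_deg_map_eq_wdeg: "W_deg (map w [0..<n]) t = wdeg n w t"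
  unfolding W_deg_def wdeg_def by (rule sum.cong) auto

lemma wdeg_var_term: "z < n \<Longrightarrow> wdeg n w (var_term z) = w z"
  by (simp add: wdeg_def lookup_var_term if_distrib cong: if_cong)

lemma wdeg_cong: "(\<And>i. Poly_Mapping.lookup u i \<noteq> 0 \<Longrightarrow> w' i = w i) \<Longrightarrow> wdeg n w' u = wdeg n w u"
  unfolding wdeg_def by (rule sum.cong) auto

lemma wdeg_le_tdeg:
  assumes "\<And>i. w i \<le> d"
  shows "wdeg n w t \<le> d * tdeg t"
proof -
  have "wdeg n w t \<le> d * (\<Sum>i<n. Poly_Mapping.lookup t i)"
    unfolding wdeg_def sum_distrib_left using assms by (intro sum_mono) auto
  also have "(\<Sum>i<n. Poly_Mapping.lookup t i) = (\<Sum>i\<in>{..<n} \<inter> Poly_Mapping.keys t. Poly_Mapping.lookup t i)"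
    by (rule sum.mono_neutral_right) (auto simp: in_keys_iff)
  also have "\<dots> \<le> tdeg t"
    unfolding tdeg_def by (rule sum_mono2) auto
  finally show ?thesis by simp
qed

definition low_terms :: "nat \<Rightarrow> nat list \<Rightarrow> (nat \<Rightarrow> nat) \<Rightarrow> nat \<Rightarrow> term_ set" where
  "low_terms n Zc w b = {u. (\<forall>k\<in>set Zc. Poly_Mapping.lookup u k = 0) \<and> wdeg n w u < b}"

lemma low_terms_mono:
  assumes "set Z' \<subseteq> set Zc" "\<And>k. k \<notin> set Zc \<Longrightarrow> w' k = w k" "b \<le> b'"
  shows "low_terms n Zc w b \<subseteq> low_terms n Z' w' b'"
proof
  fix u assume u: "u \<in> low_terms n Zc w b"
  have "wdeg n w' u = wdeg n w u"
  proof (rule wdeg_cong)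
    fix i assume "Poly_Mapping.lookup u i \<noteq> 0"
    with u have "i \<notin> set Zc" by (auto simp: low_terms_def)
    then show "w' i = w i" by (rule assms(2))
  qed
  with u assms(1,3) show "u \<in> low_terms n Z' w' b'" by (auto simp: low_terms_def)
qed

lemma low_terms_if_tdeg_le:
  assumes "\<And>i. w i \<le> d" "tdeg u \<le> \<delta>" "\<forall>k\<in>set Zc. Poly_Mapping.lookup u k = 0"
  shows "u \<in> low_terms n Zc w (\<delta> * d + 1)"
proof -
  have "wdeg n w u \<le> d * \<delta>"
    using wdeg_le_tdeg[of w d n u] assms(1,2) by (meson le_trans mult_le_mono2)
  then show ?thesis using assms(3) by (simp add: low_terms_def mult.commute)
qed

definition span_mod :: "('a::field) mpoly list \<Rightarrow> term_ set \<Rightarrow> 'a mpoly \<Rightarrow> bool" where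
  "span_mod gs S p \<longleftrightarrow> Poly_Mapping.keys p \<subseteq> terms_of gs \<and>
     (\<exists>h\<in>span_K gs. Poly_Mapping.keys (h - p) \<subseteq> S)"

lemma span_mod_mono: "span_mod gs S p \<Longrightarrow> S \<subseteq> S' \<Longrightarrow> span_mod gs S' p"
  by (auto simp: span_mod_def)

lemma span_mod_generator:
  assumes "g \<in> set gs"
  shows "span_mod gs S g"
proof -
  from assms obtain i where "i < length gs" "g = gs ! i" by (auto simp: in_set_conv_nth)
  then have "g \<in> span_K gs" by (simp add: nth_in_span_K)
  with assms show ?thesis by (auto simp: span_mod_def terms_of_def intro!: bexI[of _ g])
qed

lemma span_mod_LI:
  assumes "distinct Z" "\<forall>p\<in>set gl. span_mod gs S p" "q \<in> set (LI n Z gl)"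
  shows "span_mod gs S q"
proof -
  obtain c where q: "q = (\<Sum>k<length gl. pscale (c k) (gl ! k))"
    using LI_lincomb[OF assms(1,3)] by blast
  have "\<forall>k. \<exists>h. k < length gl \<longrightarrow> h \<in> span_K gs \<and> Poly_Mapping.keys (h - gl ! k) \<subseteq> S"
    using assms(2) by (meson nth_mem span_mod_def)
  then obtain h where h: "\<And>k. k < length gl \<Longrightarrow> h k \<in> span_K gs \<and> Poly_Mapping.keys (h k - gl ! k) \<subseteq> S"
    by metis
  have "Poly_Mapping.keys q \<subseteq> terms_of gs"
    using keys_lincomb_subset[of c "\<lambda>k. gl ! k" "{..<length gl}"] assms(2)
    unfolding q span_mod_def by fastforce
  moreover have "(\<Sum>k<length gl. pscale (c k) (h k)) \<in> span_K gs"
    by (rule lincomb_in_span_K) (use h in auto)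
  moreover have "(\<Sum>k<length gl. pscale (c k) (h k)) - q = (\<Sum>k<length gl. pscale (c k) (h k - gl ! k))"
    by (simp add: q pscale_diff sum_subtractf)
  then have "Poly_Mapping.keys ((\<Sum>k<length gl. pscale (c k) (h k)) - q) \<subseteq> S"
    using keys_lincomb_subset[of c "\<lambda>k. h k - gl ! k" "{..<length gl}"] h by fastforce
  ultimately show ?thesis unfolding span_mod_def by blast
qed

lemma span_mod_del_nondiv:
  assumes "span_mod gs S p"
    and "\<And>u. u \<in> Poly_Mapping.keys p \<Longrightarrow> \<forall>k\<in>set Z. Poly_Mapping.lookup u k = 0 \<Longrightarrow> u \<in> S"
  shows "span_mod gs S (del_nondiv Z p)"
proof -
  obtain h where h: "h \<in> span_K gs" "Poly_Mapping.keys (h - p) \<subseteq> S"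
    and p: "Poly_Mapping.keys p \<subseteq> terms_of gs"
    using assms(1) by (auto simp: span_mod_def)
  have "u \<in> S" if u: "u \<in> Poly_Mapping.keys (h - del_nondiv Z p)" for u
  proof (cases "(\<exists>k\<in>set Z. Poly_Mapping.lookup u k > 0) \<or> u \<notin> Poly_Mapping.keys p")
    case True
    then have "Poly_Mapping.lookup (h - del_nondiv Z p) u = Poly_Mapping.lookup (h - p) u"
      by (auto simp: Poly_Mapping.lookup_minus lookup_del_nondiv in_keys_iff)
    with u h(2) show ?thesis by (auto simp: in_keys_iff)
  next
    case False
    with assms(2) show ?thesis by auto
  qed
  with h(1) p keys_del_nondiv_subset show ?thesis unfolding span_mod_def by blast
qed

text \<open>One round of CHECK on a single list element: the new bound \<open>\<delta> d + 1\<close> exceeds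
  the weight of every term of degree at most \<open>\<delta>\<close> once all weights are at most d.\<close>
lemma span_mod_del_nondiv_low_terms:
  assumes "span_mod gs (low_terms n Zc w d) q" and "\<forall>t\<in>terms_of gs. tdeg t \<le> \<delta>"
    and "set Z' \<subseteq> set Zc" "\<And>k. k \<notin> set Zc \<Longrightarrow> w' k = w k" "\<And>k. w' k \<le> d" "d \<le> \<delta> * d + 1"
  shows "span_mod gs (low_terms n Z' w' (\<delta> * d + 1)) (del_nondiv Z' q)"
proof (rule span_mod_del_nondiv)
  show "span_mod gs (low_terms n Z' w' (\<delta> * d + 1)) q"
    using assms(1) low_terms_mono[OF assms(3,4,6)] by (rule span_mod_mono)
  show "u \<in> low_terms n Z' w' (\<delta> * d + 1)"
    if "u \<in> Poly_Mapping.keys q" "\<forall>k\<in>set Z'. Poly_Mapping.lookup u k = 0" for u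
    using low_terms_if_tdeg_le[OF assms(5)] that assms(1,2) by (auto simp: span_mod_def)
qed

definition separator ::
  "nat \<Rightarrow> ('a::field) mpoly list \<Rightarrow> nat list \<Rightarrow> (nat \<Rightarrow> nat) \<Rightarrow> nat \<Rightarrow> nat \<Rightarrow> 'a mpoly \<Rightarrow> bool" where
  "separator n gs Zc w b z h \<longleftrightarrow> h \<in> span_K gs \<and> Poly_Mapping.lookup h (var_term z) = 1 \<and>
     Poly_Mapping.keys h - {var_term z} \<subseteq> low_terms n Zc w b"

lemma separator_mono:
  assumes "separator n gs Zc w b z h"
    and "set Z' \<subseteq> set Zc" "\<And>k. k \<notin> set Zc \<Longrightarrow> w' k = w k" "b \<le> b'"
  shows "separator n gs Z' w' b' z h"
  using assms(1) low_terms_mono[of Z' Zc w' w b b' n] assms(2-4) unfolding separator_def by blast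

lemma separator_of_var_poly:
  assumes "z \<in> set Zc" "span_mod gs (low_terms n Zc w b) (var_poly z)"
  shows "\<exists>h. separator n gs Zc w b z h"
proof -
  obtain h where h: "h \<in> span_K gs" "Poly_Mapping.keys (h - var_poly z) \<subseteq> low_terms n Zc w b"
    using assms(2) by (auto simp: span_mod_def)
  have "var_term z \<notin> low_terms n Zc w b"
    using assms(1) by (auto simp: low_terms_def lookup_var_term)
  with h(2) have "var_term z \<notin> Poly_Mapping.keys (h - var_poly z)" by blast
  then have "Poly_Mapping.lookup h (var_term z) = 1"
    by (simp add: in_keys_iff Poly_Mapping.lookup_minus lookup_var_poly)
  moreover have "Poly_Mapping.keys h - {var_term z} \<subseteq> Poly_Mapping.keys (h - var_poly z)"
  proof
    fix u assume "u \<in> Poly_Mapping.keys h - {var_term z}"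
    then show "u \<in> Poly_Mapping.keys (h - var_poly z)"
      by (simp add: in_keys_iff Poly_Mapping.lookup_minus lookup_var_poly)
  qed
  ultimately show ?thesis using h unfolding separator_def by blast
qed

text \<open>A state with status \<open>Some False\<close> (result Fail) satisfies the invariant trivially.\<close>
definition check_inv :: "nat \<Rightarrow> ('a::field) mpoly list \<Rightarrow> nat list \<Rightarrow> 'a check_state \<Rightarrow> bool" where
  "check_inv n gs Z st \<longleftrightarrow> (case st of (gl, Zc, w, d, s) \<Rightarrow> s = Some False \<or>
     (\<forall>p\<in>set gl. span_mod gs (low_terms n Zc w d) p) \<and> set Zc \<subseteq> set Z \<and> distinct Zc \<and>
     (\<forall>k. w k < d) \<and> (\<forall>z\<in>set Z - set Zc. \<exists>h. separator n gs Zc w (w z) z h) \<and>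
     (s = Some True \<longrightarrow> Zc = []))"

lemma check_body_preserves_inv:
  assumes inv: "check_inv n gs Z st" and run: "check_running st"
    and deg: "\<forall>t\<in>terms_of gs. tdeg t \<le> \<delta>"
  shows "check_inv n gs Z (check_body n \<delta> st)"
proof -
  obtain gl Zc w d where st: "st = (gl, Zc, w, d, None)"
    using run by (cases st) (auto simp: check_running_def)
  have gl: "\<forall>p\<in>set gl. span_mod gs (low_terms n Zc w d) p" and Zc: "set Zc \<subseteq> set Z" "distinct Zc"
    and w: "\<forall>k. w k < d" and sep: "\<forall>z\<in>set Z - set Zc. \<exists>h. separator n gs Zc w (w z) z h"
    using inv by (simp_all add: check_inv_def st)
  define gs1 where "gs1 = LI n Zc gl"
  define Zt where "Zt = filter (\<lambda>z. var_poly z \<in> set gs1) Zc"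
  have gs1: "\<forall>q\<in>set gs1. span_mod gs (low_terms n Zc w d) q"
    using span_mod_LI[OF Zc(2) gl] by (simp add: gs1_def)
  show ?thesis
  proof (cases "Zt = []")
    case True
    then show ?thesis
      by (simp add: check_body_def st Let_def gs1_def[symmetric] Zt_def[symmetric] check_inv_def)
  next
    case False
    define w' where "w' = (\<lambda>k. if k \<in> set Zt then d else w k)"
    define Z' where "Z' = filter (\<lambda>z. z \<notin> set Zt) Zc"
    have body: "check_body n \<delta> st
        = (map (del_nondiv Z') gs1, Z', w', \<delta> * d + 1, if Z' = [] then Some True else None)"
      using False by (simp add: check_body_def st Let_def gs1_def[symmetric] Zt_def[symmetric] w'_def Z'_def)
    have Z': "set Z' \<subseteq> set Zc" "distinct Z'" using Zc(2) by (auto simp: Z'_def)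
    have w'_out: "w' k = w k" if "k \<notin> set Zc" for k using that by (auto simp: w'_def Zt_def)
    have w'_le: "w' k \<le> d" for k using w by (simp add: w'_def less_imp_le)
    obtain z0 where "var_poly z0 \<in> set gs1" using False by (auto simp: Zt_def filter_empty_conv)
    then have "var_term z0 \<in> terms_of gs" using gs1 by (force simp: span_mod_def keys_var_poly)
    then have "1 \<le> \<delta>" using deg tdeg_var_term by metis
    then have "1 * d \<le> \<delta> * d" by (rule mult_le_mono1)
    then have "d < \<delta> * d + 1" by linarith
    have "\<forall>p\<in>set (map (del_nondiv Z') gs1). span_mod gs (low_terms n Z' w' (\<delta> * d + 1)) p"
      using gs1 span_mod_del_nondiv_low_terms[OF _ deg Z'(1) w'_out w'_le] \<open>d < \<delta> * d + 1\<close> by auto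
    moreover have "\<exists>h. separator n gs Z' w' (w' z) z h" if "z \<in> set Z - set Z'" for z
    proof (cases "z \<in> set Zt")
      case True
      then have "z \<in> set Zc" "span_mod gs (low_terms n Zc w d) (var_poly z)"
        using gs1 by (auto simp: Zt_def)
      then obtain h where "separator n gs Zc w d z h" using separator_of_var_poly by blast
      then have "separator n gs Z' w' (w' z) z h"
        by (rule separator_mono) (use Z'(1) w'_out True in \<open>auto simp: w'_def\<close>)
      then show ?thesis ..
    next
      case False
      with that have "z \<in> set Z - set Zc" by (auto simp: Z'_def)
      then obtain h where "separator n gs Zc w (w z) z h" using sep by blast
      then have "separator n gs Z' w' (w' z) z h"
        by (rule separator_mono) (use Z'(1) w'_out False in \<open>auto simp: w'_def\<close>)
      then show ?thesis ..
    qed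
    moreover have "\<forall>k. w' k < \<delta> * d + 1" using w'_le \<open>d < \<delta> * d + 1\<close> le_less_trans by blast
    ultimately show ?thesis using Z' Zc(1) by (auto simp: body check_inv_def)
  qed
qed

lemma check_loop_terminates: "\<exists>st'. while_option check_running (check_body n \<delta>) st = Some st'"
proof (rule measure_while_option_Some[where P = "\<lambda>_. True"
      and f = "\<lambda>(gl, Zc, w, d, s). length Zc + (if s = None then 1 else 0)"])
  fix st :: "'a check_state" assume "check_running st"
  then obtain gl Zc w d where st: "st = (gl, Zc, w, d, None)"
    by (cases st) (auto simp: check_running_def)
  define Zt where "Zt = filter (\<lambda>z. var_poly z \<in> set (LI n Zc gl)) Zc"
  have "length (filter (\<lambda>z. z \<notin> set Zt) Zc) < length Zc" if "Zt \<noteq> []"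
  proof -
    from that obtain z where "z \<in> set Zt" by (cases Zt) auto
    then show ?thesis by (intro length_filter_less[of z]) (auto simp: Zt_def)
  qed
  then show "True \<and> (case check_body n \<delta> st of (gl, Zc, w, d, s) \<Rightarrow> length Zc + (if s = None then 1 else 0))
      < (case st of (gl, Zc, w, d, s) \<Rightarrow> length Zc + (if s = None then 1 else 0))"
    by (auto simp: check_body_def st Let_def Zt_def[symmetric])
qed simp

lemma CHECK_terminates: "CHECK n gs Z \<noteq> None"
proof -
  obtain st where "while_option check_running (check_body n (Max (insert 0 (pdeg ` set gs))))
      (map (del_nondiv Z) gs, Z, \<lambda>_. 0, 1, None) = Some st"
    using check_loop_terminates by blast
  then show ?thesis by (auto simp: CHECK_def Let_def split: prod.splits)
qed

lemma tdeg_le_max_pdeg: "t \<in> terms_of gs \<Longrightarrow> tdeg t \<le> Max (insert 0 (pdeg ` set gs))"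
proof -
  assume "t \<in> terms_of gs"
  then obtain g where g: "g \<in> set gs" "t \<in> Poly_Mapping.keys g" by (auto simp: terms_of_def)
  have "tdeg t \<le> pdeg g" unfolding pdeg_def using g(2) by (intro Max_ge) auto
  also have "\<dots> \<le> Max (insert 0 (pdeg ` set gs))" using g(1) by (intro Max_ge) auto
  finally show ?thesis .
qed

lemma CHECK_Weights_separators:
  assumes "distinct Z" "\<forall>z\<in>set Z. z < n" "CHECK n gs Z = Some (Weights W)"
  shows "length W = n \<and> (\<forall>z\<in>set Z. \<exists>h\<in>span_K gs. Poly_Mapping.lookup h (var_term z) = 1 \<and>
           (\<forall>u\<in>Poly_Mapping.keys h - {var_term z}. W_deg W u < W_deg W (var_term z)))"
proof -
  define \<delta> where "\<delta> = Max (insert 0 (pdeg ` set gs))"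
  define st0 :: "'a check_state" where "st0 = (map (del_nondiv Z) gs, Z, \<lambda>_. 0, 1, None)"
  have deg: "\<forall>t\<in>terms_of gs. tdeg t \<le> \<delta>"
    unfolding \<delta>_def using tdeg_le_max_pdeg by blast
  have "span_mod gs (low_terms n Z (\<lambda>_. 0) 1) (del_nondiv Z g)" if "g \<in> set gs" for g
    using span_mod_generator[OF that] by (rule span_mod_del_nondiv) (simp add: low_terms_def wdeg_def)
  then have "check_inv n gs Z st0" using assms(1) by (auto simp: check_inv_def st0_def)
  obtain st where loop: "while_option check_running (check_body n \<delta>) st0 = Some st"
    using check_loop_terminates by blast
  have "check_inv n gs Z st"
    using while_option_rule[where P = "check_inv n gs Z", OF _ loop \<open>check_inv n gs Z st0\<close>]
      check_body_preserves_inv[OF _ _ deg]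
    by blast
  obtain gl Zc w d s where st: "st = (gl, Zc, w, d, s)" by (cases st)
  with assms(3) loop have "s = Some True" and W: "W = map w [0..<n]"
    by (auto simp: CHECK_def Let_def \<delta>_def st0_def split: if_splits)
  with \<open>check_inv n gs Z st\<close> have "\<forall>z\<in>set Z. \<exists>h. separator n gs [] w (w z) z h"
    by (auto simp: check_inv_def st)
  with assms(2) show ?thesis
    by (fastforce simp: W W_deg_map_eq_wdeg wdeg_var_term separator_def low_terms_def)
qed

lemma zero_le_term: "(0::term_) \<le> t"
proof (cases "t = 0")
  case False
  have ex: "\<exists>k. Poly_Mapping.lookup t k \<noteq> 0"
  proof (rule ccontr)
    assume "\<not> ?thesis"
    then have "t = 0" by (intro poly_mapping_eqI) simp
    with False show False by simp
  qed
  define k where "k = (LEAST k. Poly_Mapping.lookup t k \<noteq> 0)"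
  have "Poly_Mapping.lookup t k \<noteq> 0" using LeastI_ex[OF ex] k_def by simp
  moreover have "\<forall>k'<k. Poly_Mapping.lookup t k' = 0" using not_less_Least k_def by blast
  ultimately have "less_fun (Poly_Mapping.lookup 0) (Poly_Mapping.lookup t)"
    unfolding less_fun_def by (intro exI[of _ k]) auto
  then have "0 < t" by (simp add: less_poly_mapping.rep_eq)
  then show ?thesis by simp
qed simp

text \<open>The order \<open>\<le>\<close> on terms is the lexicographic order of exponent vectors.\<close>
definition W_deg_lex :: "nat list \<Rightarrow> term_ \<Rightarrow> term_ \<Rightarrow> bool" where
  "W_deg_lex W t u \<longleftrightarrow> W_deg W t < W_deg W u \<or> (W_deg W t = W_deg W u \<and> t \<le> u)"

lemma W_deg_add: "W_deg W (t + u) = W_deg W t + W_deg W u"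
  by (simp add: W_deg_def Poly_Mapping.lookup_add algebra_simps sum.distrib)

lemma W_deg_zero: "W_deg W 0 = 0"
  by (simp add: W_deg_def)

lemma term_ordering_W_deg_lex: "term_ordering n (W_deg_lex W)"
  unfolding term_ordering_def W_deg_lex_def
  using zero_le_term W_deg_add W_deg_zero by (auto simp: add_right_mono intro: order_trans)

lemma compatible_with_grading_W_deg_lex: "compatible_with_grading n W (W_deg_lex W)"
  unfolding compatible_with_grading_def W_deg_lex_def by auto

lemma LT_eq_if_W_deg_greatest:
  assumes to: "term_ordering n ord" and cg: "compatible_with_grading n W ord"
    and f: "Poly_Mapping.keys f \<subseteq> terms_in n" and t: "t \<in> Poly_Mapping.keys f"
    and greatest: "\<forall>u\<in>Poly_Mapping.keys f - {t}. W_deg W u < W_deg W t"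
  shows "LT ord f = t"
  unfolding LT_def
proof (rule the_equality)
  have below: "ord u t \<and> u \<noteq> t" if "u \<in> Poly_Mapping.keys f" "u \<noteq> t" for u
    using cg greatest f t that unfolding compatible_with_grading_def by blast
  moreover have "ord t t" using to f t by (auto simp: term_ordering_def)
  ultimately show "t \<in> Poly_Mapping.keys f \<and> (\<forall>u\<in>Poly_Mapping.keys f. ord u t)"
    using t by blast
  fix t' assume t': "t' \<in> Poly_Mapping.keys f \<and> (\<forall>u\<in>Poly_Mapping.keys f. ord u t')"
  show "t' = t"
  proof (rule ccontr)
    assume "t' \<noteq> t"
    with below t' t have "ord t' t" "ord t t'" by auto
    with to f t t' show False using \<open>t' \<noteq> t\<close> unfolding term_ordering_def by blast
  qed
qed

theorem mainTheorem2:
  fixes n :: nat and gs :: "('a::field) mpoly list" and Z :: "nat list"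
  assumes "\<forall>g\<in>set gs. g \<in> polys_in n"
    and "distinct Z" and "\<forall>z\<in>set Z. z < n"
  shows "CHECK n gs Z \<noteq> None \<and>
    (\<forall>W. CHECK n gs Z = Some (Weights W) \<longrightarrow>
       length W = n \<and>
       (\<exists>f::nat \<Rightarrow> 'a mpoly.
          (\<forall>i<length Z. f i \<in> span_K gs) \<and>
          (\<forall>ord. term_ordering n ord \<and> compatible_with_grading n W ord \<longrightarrow>
                (\<forall>i<length Z. f i \<noteq> 0 \<and> LT ord (f i) = var_term (Z ! i))) \<and>
          (\<forall>i<length Z. f i \<in> ideal_gen n gs) \<and>
          (\<exists>ord. term_ordering n ord \<and> (\<forall>i<length Z. f i \<noteq> 0 \<and> LT ord (f i) = var_term (Z ! i)))))"
proof (intro conjI allI impI CHECK_terminates)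
  fix W assume CW: "CHECK n gs Z = Some (Weights W)"
  show "length W = n" using CHECK_Weights_separators[OF assms(2,3) CW] by blast
  have "\<forall>i. \<exists>h. i < length Z \<longrightarrow> h \<in> span_K gs \<and> Poly_Mapping.lookup h (var_term (Z ! i)) = 1 \<and>
      (\<forall>u\<in>Poly_Mapping.keys h - {var_term (Z ! i)}. W_deg W u < W_deg W (var_term (Z ! i)))"
    using CHECK_Weights_separators[OF assms(2,3) CW] by (meson nth_mem)
  then obtain f where f: "\<And>i. i < length Z \<Longrightarrow> f i \<in> span_K gs \<and>
      Poly_Mapping.lookup (f i) (var_term (Z ! i)) = 1 \<and>
      (\<forall>u\<in>Poly_Mapping.keys (f i) - {var_term (Z ! i)}. W_deg W u < W_deg W (var_term (Z ! i)))"
    by metis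
  have keys_f: "Poly_Mapping.keys (f i) \<subseteq> terms_in n" if "i < length Z" for i
    using keys_span_K f[OF that] assms(1) by (fastforce simp: terms_of_def polys_in_def)
  have LT_f: "f i \<noteq> 0 \<and> LT ord (f i) = var_term (Z ! i)"
    if "term_ordering n ord" "compatible_with_grading n W ord" "i < length Z" for ord i
    using f[OF that(3)] LT_eq_if_W_deg_greatest[OF that(1,2) keys_f[OF that(3)]]
    by (auto simp: in_keys_iff)
  show "\<exists>f::nat \<Rightarrow> 'a mpoly. (\<forall>i<length Z. f i \<in> span_K gs) \<and>
      (\<forall>ord. term_ordering n ord \<and> compatible_with_grading n W ord \<longrightarrow>
        (\<forall>i<length Z. f i \<noteq> 0 \<and> LT ord (f i) = var_term (Z ! i))) \<and>
      (\<forall>i<length Z. f i \<in> ideal_gen n gs) \<and>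
      (\<exists>ord. term_ordering n ord \<and> (\<forall>i<length Z. f i \<noteq> 0 \<and> LT ord (f i) = var_term (Z ! i)))"
  proof (intro exI[of _ f] conjI allI impI)
    show "\<exists>ord. term_ordering n ord \<and> (\<forall>i<length Z. f i \<noteq> 0 \<and> LT ord (f i) = var_term (Z ! i))"
      using LT_f term_ordering_W_deg_lex compatible_with_grading_W_deg_lex by blast
  qed (use f LT_f span_K_subset_ideal_gen in blast)+
qed

end
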